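(* Let $f\in\mathbb{Q}^n\setminus\mathbb{Z}^n$ and $\alpha>1$. Then: (a) There exists a maximal lattice-free simplex $L\in\mathcal{L}_{n+1}^n$ with $f\in\operatorname{int}(L)$ such that, for some choice of integer points $z_1,\dots,z_{n+1}$ lying in the relative interiors of the $n+1$ distinct facets of $L$ (one in each), for all $i,j\in[n+1]$ with $i\ne j$ the segment $[z_i,z_j]$ intersects $L_\alpha=\frac1\alpha L+\left(1-\frac1\alpha\right)f$. (b) For every simplex $L$ as in (a), one has $\rho_f(B,L)\ge\alpha$ for every $B\in\mathcal{L}_n^n$.
   Context: A set $B\subseteq\mathbb{R}^n$ is lattice-free if it is an $n$-dimensional closed convex set with $\operatorname{int}(B)\cap\mathbb{Z}^n=\emptyset$; maximal lattice-free if not a proper subset of another lattice-free set. $\mathcal{L}_i^n$ is the family of lattice-free polyhedra in $\mathbb{R}^n$ with at most $i$ facets. For $B$ closed convex with $0\in\operatorname{int}(B)$, $\psi_B(r)=\inf\{\lambda>0:r\in\lambda B\}$. For $k\in\mathbb{N}$, $R=(r_1,\dots,r_k)\in\mathbb{R}^{n\times k}$ and an $n$-dimensional closed convex $B$: if $f\in\operatorname{int}(B)$, $C_B(R,f)=\{s\in\mathbb{R}^k_{\ge0}:\sum_j s_j\psi_{B-f}(r_j)\ge1\}$, otherwise $C_B(R,f)=\mathbb{R}^k_{\ge0}$. $\rho_f(B,L)=\inf\{\alpha'>0:C_B(R,f)\subseteq\frac1{\alpha'}C_L(R,f)$ for all $k$ and all $R\in\mathbb{R}^{n\times k}\}$.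 *)

theory Defs
  imports "HOL-Analysis.Analysis"
begin

definition lattice_pt :: "real^'n \<Rightarrow> bool" where
  "lattice_pt x \<longleftrightarrow> (\<forall>i. x $ i \<in> \<int>)"

definition lattice_free :: "(real^'n) set \<Rightarrow> bool" where
  "lattice_free B \<longleftrightarrow> closed B \<and> convex B \<and> aff_dim B = int CARD('n)
     \<and> (\<forall>x\<in>interior B. \<not> lattice_pt x)"

definition max_lattice_free :: "(real^'n) set \<Rightarrow> bool" where
  "max_lattice_free B \<longleftrightarrow> lattice_free B \<and> (\<forall>B'. lattice_free B' \<and> B \<subseteq> B' \<longrightarrow> B' = B)"

definition LF_poly :: "nat \<Rightarrow> (real^'n) set set" where
  "LF_poly i = {B. lattice_free B \<and> polyhedron B \<and> finite {F. F facet_of B}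
                  \<and> card {F. F facet_of B} \<le> i}"

definition gauge :: "(real^'n) set \<Rightarrow> real^'n \<Rightarrow> real" where
  "gauge B r = Inf {t. t > 0 \<and> r \<in> (\<lambda>x. t *\<^sub>R x) ` B}"

text \<open>C_B(R,f) for R = (r_0,...,r_{k-1}); points s of R^k_{>=0} are represented as
  functions nat => real vanishing outside {..<k}.\<close>
definition Ccone :: "(real^'n) set \<Rightarrow> nat \<Rightarrow> (nat \<Rightarrow> real^'n) \<Rightarrow> real^'n \<Rightarrow> (nat \<Rightarrow> real) set" where
  "Ccone B k r f = {s. (\<forall>j\<ge>k. s j = 0) \<and> (\<forall>j<k. s j \<ge> 0) \<and>
      (f \<in> interior B \<longrightarrow> (\<Sum>j<k. s j * gauge ((\<lambda>x. x - f) ` B) (r j)) \<ge> 1)}"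

definition scale_set :: "real \<Rightarrow> (nat \<Rightarrow> real) set \<Rightarrow> (nat \<Rightarrow> real) set" where
  "scale_set c C = (\<lambda>s. (\<lambda>j. c * s j)) ` C"

text \<open>rho_f(B,L), with value +infinity when no alpha' works.\<close>
definition rho :: "real^'n \<Rightarrow> (real^'n) set \<Rightarrow> (real^'n) set \<Rightarrow> ereal" where
  "rho f B L = Inf (ereal ` {\<alpha>'. \<alpha>' > 0 \<and>
      (\<forall>k r. Ccone B k r f \<subseteq> scale_set (1 / \<alpha>') (Ccone L k r f))})"

definition shrink :: "real \<Rightarrow> real^'n \<Rightarrow> (real^'n) set \<Rightarrow> (real^'n) set" where
  "shrink \<alpha> f L = (\<lambda>x. (1/\<alpha>) *\<^sub>R x + (1 - 1/\<alpha>) *\<^sub>R f) ` L"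

text \<open>The property of L in part (a); facets indexed by 0..n (n = CARD('n)).\<close>
definition good_simplex :: "real \<Rightarrow> real^'n \<Rightarrow> (real^'n) set \<Rightarrow> bool" where
  "good_simplex \<alpha> f L \<longleftrightarrow>
     int CARD('n) simplex L \<and> max_lattice_free L \<and> L \<in> LF_poly (CARD('n) + 1) \<and>
     f \<in> interior L \<and>
     (\<exists>F z. bij_betw F {..CARD('n)} {G. G facet_of L} \<and>
        (\<forall>i\<le>CARD('n). lattice_pt (z i) \<and> z i \<in> rel_interior (F i)) \<and>
        (\<forall>i\<le>CARD('n). \<forall>j\<le>CARD('n). i \<noteq> j \<longrightarrow>
            closed_segment (z i) (z j) \<inter> shrink \<alpha> f L \<noteq> {}))"

end

theory Submission
  imports Defs
begin

text \<open>
  Part (b): if the cone containment holds with a factor alpha' < alpha, testing it on single rays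
  shows that the gauge of B - f is at most alpha' times that of L - f, so the shrunken simplex
  L_alpha lies in the interior of B. Each of the n + 1 lattice points z_i lies outside int B and
  hence beyond some facet of B; as B has at most n facets, two of them lie beyond the same facet,
  and so does the segment joining them, which therefore misses int B and with it L_alpha.

  Part (a): after a unimodular change of coordinates, f = gamma e_k with gamma not an integer. Start
  from the lattice segment on the k-th axis containing f and add the remaining coordinates one at a
  time. Each step replaces the simplex by the pyramid whose apex lies slightly below f in the new
  coordinate and whose base is the old simplex stretched about f and lifted to height 1. Lattice
  points of the new relative interior can only be at height 0, where the pyramid meets exactly the
  old relative interior. The old facet points stay in the relative interiors of the new side
  facets, the base gets a translate of one of them, and the new segments meet L_alpha.
\<close>

section \<open>Lattice-free simplices\<close>

lemma rel_interior_convex_hull_insert: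
  fixes X :: "'a::euclidean_space set"
  assumes "X \<noteq> {}"
  shows "rel_interior (convex hull (insert w X)) =
     {u *\<^sub>R w + (1 - u) *\<^sub>R y | u y. 0 < u \<and> u < 1 \<and> y \<in> rel_interior (convex hull X)}"
proof -
  define S where "S b = (if b then {w} else convex hull X)" for b
  have "convex hull (insert w X) = convex hull (\<Union>(S ` UNIV))"
    using hull_insert[of convex w X] by (simp add: S_def UNIV_bool Un_commute)
  also have "rel_interior \<dots> =
    {\<Sum>i\<in>UNIV. c i *\<^sub>R s i | c s. (\<forall>i\<in>UNIV. c i > 0) \<and> sum c UNIV = 1 \<and>
      (\<forall>i\<in>UNIV. s i \<in> rel_interior (S i))}"
    by (rule rel_interior_convex_hull_union) (auto simp: S_def assms convex_convex_hull)
  also have "\<dots> = {u *\<^sub>R w + (1 - u) *\<^sub>R y | u y. 0 < u \<and> u < 1 \<and> y \<in> rel_interior (convex hull X)}"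
  proof (intro equalityI subsetI)
    fix x assume "x \<in> {\<Sum>i\<in>UNIV. c i *\<^sub>R s i | c s. (\<forall>i\<in>UNIV. c i > 0) \<and> sum c UNIV = 1 \<and>
      (\<forall>i\<in>UNIV. s i \<in> rel_interior (S i))}"
    then obtain c s where cs: "\<forall>i. c i > 0" "sum c UNIV = 1" "\<forall>i. s i \<in> rel_interior (S i)"
      "x = (\<Sum>i\<in>UNIV. c i *\<^sub>R s i)"
      by blast
    have "c False = 1 - c True" using cs(2) by (simp add: UNIV_bool)
    then have "x = c True *\<^sub>R w + (1 - c True) *\<^sub>R s False"
      using cs(3)[rule_format, of True] cs(4) by (simp add: S_def UNIV_bool)
    moreover have "s False \<in> rel_interior (convex hull X)" using cs(3)[rule_format, of False] by (simp add: S_def)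
    moreover have "0 < c True" "c True < 1"
      using cs(1)[rule_format, of True] cs(1)[rule_format, of False] cs(2) by (simp_all add: UNIV_bool)
    ultimately show "x \<in> {u *\<^sub>R w + (1 - u) *\<^sub>R y | u y. 0 < u \<and> u < 1 \<and> y \<in> rel_interior (convex hull X)}"
      by blast
  next
    fix x assume "x \<in> {u *\<^sub>R w + (1 - u) *\<^sub>R y | u y. 0 < u \<and> u < 1 \<and> y \<in> rel_interior (convex hull X)}"
    then obtain u y where uy: "0 < u" "u < 1" "y \<in> rel_interior (convex hull X)" "x = u *\<^sub>R w + (1 - u) *\<^sub>R y"
      by blast
    define c where "c b = (if b then u else 1 - u)" for b
    define s where "s b = (if b then w else y)" for b
    have "(\<forall>i\<in>UNIV. c i > 0) \<and> sum c UNIV = 1 \<and> (\<forall>i\<in>UNIV. s i \<in> rel_interior (S i)) \<and>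
      x = (\<Sum>i\<in>UNIV. c i *\<^sub>R s i)"
      using uy by (auto simp: c_def s_def S_def UNIV_bool)
    then show "x \<in> {\<Sum>i\<in>UNIV. c i *\<^sub>R s i | c s. (\<forall>i\<in>UNIV. c i > 0) \<and> sum c UNIV = 1 \<and>
      (\<forall>i\<in>UNIV. s i \<in> rel_interior (S i))}" by blast
  qed
  finally show ?thesis .
qed

lemma bij_betw_opposite_facet:
  fixes V :: "'a::euclidean_space set"
  assumes "\<not> affine_dependent V" "2 \<le> card V"
  shows "bij_betw (\<lambda>v. convex hull (V - {v})) V {G. G facet_of convex hull V}"
proof (rule bij_betw_imageI)
  show "inj_on (\<lambda>v. convex hull (V - {v})) V"
  proof (rule inj_onI, rule ccontr)
    fix v v' assume vv: "v \<in> V" "v' \<in> V" "convex hull (V - {v}) = convex hull (V - {v'})" "v \<noteq> v'"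
    then have "v' \<in> convex hull (V - {v'})" by (metis DiffI hull_inc singletonD)
    then have "v' \<in> affine hull (V - {v'})" using convex_hull_subset_affine_hull by blast
    then show False using assms(1) vv(2) unfolding affine_dependent_def by blast
  qed
  show "(\<lambda>v. convex hull (V - {v})) ` V = {G. G facet_of convex hull V}"
    using facet_of_convex_hull_affine_independent_alt[OF assms(1)] assms(2) by auto
qed

lemma rel_interior_affinity:
  fixes S :: "'a::euclidean_space set"
  assumes "c \<noteq> 0"
  shows "rel_interior ((\<lambda>x. a + c *\<^sub>R x) ` S) = (\<lambda>x. a + c *\<^sub>R x) ` rel_interior S"
proof -
  have "(\<lambda>x. a + c *\<^sub>R x) ` T = (\<lambda>x. a + x) ` ((\<lambda>x. c *\<^sub>R x) ` T)" for T :: "'a set"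
    by (simp add: image_image)
  then show ?thesis using rel_interior_scaleR[OF assms, of S] by (simp add: rel_interior_translation)
qed

lemma affine_independent_affinity:
  fixes S :: "'a::euclidean_space set"
  assumes "c \<noteq> 0" "\<not> affine_dependent S"
  shows "\<not> affine_dependent ((\<lambda>x. a + c *\<^sub>R x) ` S)"
proof -
  have inj: "inj ((*\<^sub>R) c :: 'a \<Rightarrow> 'a)" using assms(1) by (intro injI) simp
  have "aff_dim ((\<lambda>x. c *\<^sub>R x) ` S) = aff_dim S"
    using aff_dim_injective_linear_image[OF linear_scaleR inj] by simp
  moreover have "card ((\<lambda>x. c *\<^sub>R x) ` S) = card S" using inj by (simp add: card_image inj_on_def)
  ultimately have "\<not> affine_dependent ((\<lambda>x. c *\<^sub>R x) ` S)"
    using assms(2) aff_independent_finite[OF assms(2)] by (simp add: affine_independent_iff_card)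
  moreover have "(\<lambda>x. a + c *\<^sub>R x) ` S = (\<lambda>x. a + x) ` ((\<lambda>x. c *\<^sub>R x) ` S)"
    by (simp add: image_image)
  ultimately show ?thesis using affine_dependent_translation_eq by metis
qed

lemma rel_interior_simplex_extrapolate:
  fixes V :: "'a::euclidean_space set"
  assumes ai: "\<not> affine_dependent V" and v0: "v0 \<in> V" "c v0 < 0"
    and z: "z \<in> rel_interior (convex hull (V - {v0}))"
    and c: "sum c V = 1" "(\<Sum>v\<in>V. c v *\<^sub>R v) = y"
  obtains t where "t > 0" "(1 + t) *\<^sub>R z - t *\<^sub>R y \<in> rel_interior (convex hull V)"
proof -
  have fin: "finite V" using ai aff_independent_finite by blast
  obtain d where d: "\<forall>x\<in>V - {v0}. 0 < d x" "sum d (V - {v0}) = 1" "(\<Sum>x\<in>V - {v0}. d x *\<^sub>R x) = z"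
    using z rel_interior_convex_hull_explicit[OF affine_independent_Diff[OF ai]] by blast
  define d' where "d' v = (if v = v0 then 0 else d v)" for v
  have "sum d' (V - {v0}) = sum d (V - {v0})" "(\<Sum>v\<in>V - {v0}. d' v *\<^sub>R v) = (\<Sum>v\<in>V - {v0}. d v *\<^sub>R v)"
    by (auto simp: d'_def intro: sum.cong)
  then have d'1: "sum d' V = 1" and d'z: "(\<Sum>v\<in>V. d' v *\<^sub>R v) = z"
    using d(2,3) sum.remove[OF fin v0(1), of d'] sum.remove[OF fin v0(1), of "\<lambda>v. d' v *\<^sub>R v"]
    by (simp_all add: d'_def)
  have "\<forall>\<^sub>F t in at_right 0. 0 < (1 + t) * d v - t * c v" if "v \<in> V - {v0}" for v
  proof -
    have "((\<lambda>t. (1 + t) * d v - t * c v) \<longlongrightarrow> (1 + 0) * d v - 0 * c v) (at_right (0::real))"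
      by (intro tendsto_intros)
    then show ?thesis using d(1) that by (intro order_tendstoD(1)) auto
  qed
  then have "\<forall>\<^sub>F t in at_right 0. 0 < t \<and> (\<forall>v\<in>V - {v0}. 0 < (1 + t) * d v - t * c v)"
    using fin eventually_at_right_less[of "0::real"] by (intro eventually_conj eventually_ball_finite) auto
  then obtain t where t: "0 < t" "\<forall>v\<in>V - {v0}. 0 < (1 + t) * d v - t * c v"
    using eventually_happens[of _ "at_right (0::real)"] by auto
  define e where "e v = (1 + t) * d' v - t * c v" for v
  have "\<forall>v\<in>V. 0 < e v"
    using t v0(2) by (auto simp: e_def d'_def mult_pos_neg)
  moreover have "sum e V = 1"
    unfolding e_def using d'1 c(1) by (simp add: sum_subtractf sum_distrib_left[symmetric])
  moreover have "(\<Sum>v\<in>V. e v *\<^sub>R v) = (1 + t) *\<^sub>R z - t *\<^sub>R y"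
    unfolding e_def
    by (simp add: scaleR_left_diff_distrib sum_subtractf scaleR_sum_right[symmetric] d'z c(2)
        flip: scaleR_scaleR)
  ultimately have "(1 + t) *\<^sub>R z - t *\<^sub>R y \<in> rel_interior (convex hull V)"
    using rel_interior_convex_hull_explicit[OF ai] by blast
  with t(1) show thesis by (rule that)
qed

lemma in_open_segment_extrapolate:
  fixes z y :: "'a::real_vector"
  assumes "t > 0" "z \<noteq> y"
  shows "z \<in> open_segment ((1 + t) *\<^sub>R z - t *\<^sub>R y) y"
proof -
  define s where "s = t / (1 + t)"
  have "(1 + t) *\<^sub>R z - t *\<^sub>R y \<noteq> y"
  proof
    assume "(1 + t) *\<^sub>R z - t *\<^sub>R y = y"
    then have "(1 + t) *\<^sub>R z = (1 + t) *\<^sub>R y" by (simp add: algebra_simps)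
    then show False using assms by simp
  qed
  moreover have "z = (1 - s) *\<^sub>R ((1 + t) *\<^sub>R z - t *\<^sub>R y) + s *\<^sub>R y"
  proof -
    have "(1 + t) * (1 - s) = 1" "(1 + t) * s = t" using assms(1) by (simp_all add: s_def field_simps)
    then have "(1 + t) *\<^sub>R ((1 - s) *\<^sub>R ((1 + t) *\<^sub>R z - t *\<^sub>R y) + s *\<^sub>R y) = (1 + t) *\<^sub>R z"
      by (simp add: scaleR_add_right)
    then show ?thesis using assms(1) by simp
  qed
  moreover have "0 < s" "s < 1" using assms(1) by (simp_all add: s_def)
  ultimately show ?thesis unfolding in_segment(2) by blast
qed

lemma max_lattice_free_simplex:
  fixes V :: "(real^'n) set"
  assumes ai: "\<not> affine_dependent V" and cV: "card V = CARD('n) + 1"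
    and lf: "\<forall>x \<in> interior (convex hull V). \<not> lattice_pt x"
    and zs: "\<forall>v\<in>V. \<exists>z. lattice_pt z \<and> z \<in> rel_interior (convex hull (V - {v}))"
  shows "max_lattice_free (convex hull V)"
proof -
  have fin: "finite V" using ai aff_independent_finite by blast
  have adV: "aff_dim V = int CARD('n)" using aff_dim_affine_independent[OF ai] cV by simp
  then have ad: "aff_dim (convex hull V) = int CARD('n)" by (simp add: aff_dim_convex_hull)
  have riV: "rel_interior (convex hull V) = interior (convex hull V)"
    using ad by (simp add: interior_rel_interior)
  have lfL: "lattice_free (convex hull V)"
    unfolding lattice_free_def using ad lf fin
    by (auto simp: compact_imp_closed finite_imp_compact_convex_hull)
  have "B' = convex hull V" if lB: "lattice_free B'" and sub: "convex hull V \<subseteq> B'" for B'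
  proof (rule ccontr)
    assume "B' \<noteq> convex hull V"
    then obtain y where y: "y \<in> B'" "y \<notin> convex hull V" using sub by blast
    have "y \<in> affine hull V" using adV aff_dim_eq_full[of V] by simp
    then obtain c where c: "sum c V = 1" "(\<Sum>v\<in>V. c v *\<^sub>R v) = y"
      using affine_hull_finite[OF fin] by blast
    obtain v0 where v0: "v0 \<in> V" "c v0 < 0"
    proof (rule ccontr)
      assume "\<not> thesis"
      then have "\<forall>v\<in>V. 0 \<le> c v" using that by force
      then have "y \<in> convex hull V" using c convex_hull_finite[OF fin] by blast
      then show False using y by blast
    qed
    obtain z where z: "lattice_pt z" "z \<in> rel_interior (convex hull (V - {v0}))" using zs v0 by blast
    obtain t where t: "t > 0" "(1 + t) *\<^sub>R z - t *\<^sub>R y \<in> rel_interior (convex hull V)"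
      by (rule rel_interior_simplex_extrapolate[OF ai v0 z(2) c])
    have "z \<in> convex hull V"
      using z(2) rel_interior_subset hull_mono[of "V - {v0}" V] by blast
    then have "z \<in> open_segment ((1 + t) *\<^sub>R z - t *\<^sub>R y) y"
      using in_open_segment_extrapolate[OF t(1)] y(2) by metis
    moreover have "(1 + t) *\<^sub>R z - t *\<^sub>R y \<in> interior B'"
      using t(2) riV sub interior_mono by blast
    ultimately have "z \<in> interior B'"
      using in_interior_closure_convex_segment[of B'] lB y(1) closure_subset
      by (auto simp: lattice_free_def)
    then show False using lB z(1) unfolding lattice_free_def by blast
  qed
  then show ?thesis unfolding max_lattice_free_def using lfL by blast
qed

definition witnessed_simplex ::
    "real \<Rightarrow> real^'n \<Rightarrow> (real^'n) set \<Rightarrow> (real^'n \<Rightarrow> real^'n) \<Rightarrow> bool" where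
  "witnessed_simplex \<alpha> f V z \<longleftrightarrow> \<not> affine_dependent V \<and> f \<in> rel_interior (convex hull V) \<and>
     (\<forall>x \<in> rel_interior (convex hull V). \<not> lattice_pt x) \<and>
     (\<forall>v\<in>V. lattice_pt (z v) \<and> z v \<in> rel_interior (convex hull (V - {v}))) \<and>
     (\<forall>v\<in>V. \<forall>v'\<in>V. v \<noteq> v' \<longrightarrow> closed_segment (z v) (z v') \<inter> shrink \<alpha> f (convex hull V) \<noteq> {})"

lemma self_in_shrink: "f \<in> L \<Longrightarrow> f \<in> shrink \<alpha> f L"
  unfolding shrink_def by (rule image_eqI[of _ _ f]) (simp_all add: algebra_simps flip: scaleR_add_left)

lemma shrink_mono: "L \<subseteq> L' \<Longrightarrow> shrink \<alpha> f L \<subseteq> shrink \<alpha> f L'"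
  unfolding shrink_def by (rule image_mono)

lemma good_simplex_convex_hull:
  fixes V :: "(real^'n) set"
  assumes W: "witnessed_simplex \<alpha> f V z" and cV: "card V = CARD('n) + 1"
  shows "good_simplex \<alpha> f (convex hull V)"
proof -
  have aiV: "\<not> affine_dependent V" and fri: "f \<in> rel_interior (convex hull V)"
    and lfV: "\<forall>x \<in> rel_interior (convex hull V). \<not> lattice_pt x"
    and zV: "\<forall>v\<in>V. lattice_pt (z v) \<and> z v \<in> rel_interior (convex hull (V - {v}))"
    and segV: "\<forall>v\<in>V. \<forall>v'\<in>V. v \<noteq> v' \<longrightarrow> closed_segment (z v) (z v') \<inter> shrink \<alpha> f (convex hull V) \<noteq> {}"
    using W by (simp_all add: witnessed_simplex_def)
  have finV: "finite V" using aiV aff_independent_finite by blast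
  have "aff_dim (convex hull V) = int CARD('n)"
    using aff_dim_affine_independent[OF aiV] cV by (simp add: aff_dim_convex_hull)
  then have ri: "rel_interior (convex hull V) = interior (convex hull V)"
    by (simp add: interior_rel_interior)
  have mlf: "max_lattice_free (convex hull V)"
    using max_lattice_free_simplex[OF aiV cV] lfV zV ri by blast
  have bij: "bij_betw (\<lambda>v. convex hull (V - {v})) V {G. G facet_of convex hull V}"
    using bij_betw_opposite_facet[OF aiV] cV by simp
  have LF: "convex hull V \<in> LF_poly (CARD('n) + 1)"
    unfolding LF_poly_def
  proof (intro CollectI conjI)
    show "lattice_free (convex hull V)" using mlf by (simp add: max_lattice_free_def)
    show "polyhedron (convex hull V)" by (intro polytope_imp_polyhedron polytope_convex_hull finV)
    show "finite {F. F facet_of convex hull V}" using bij_betw_finite[OF bij] finV by simp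
    show "card {F. F facet_of convex hull V} \<le> CARD('n) + 1"
      using bij_betw_same_card[OF bij] cV by simp
  qed
  obtain \<sigma> where "bij_betw \<sigma> {0..<card V} V" using ex_bij_betw_nat_finite[OF finV] by blast
  moreover have "{0..<card V} = {..CARD('n)}" using cV by auto
  ultimately have \<sigma>: "bij_betw \<sigma> {..CARD('n)} V" by simp
  have \<sigma>V: "\<sigma> i \<in> V" if "i \<le> CARD('n)" for i using \<sigma> that by (auto simp: bij_betw_def)
  have \<sigma>inj: "\<sigma> i \<noteq> \<sigma> j" if "i \<le> CARD('n)" "j \<le> CARD('n)" "i \<noteq> j" for i j
    using \<sigma> that by (auto simp: bij_betw_def inj_on_def)
  show ?thesis unfolding good_simplex_def
  proof (intro conjI exI)
    show "int CARD('n) simplex convex hull V" using aiV cV by (intro simplex_convex_hull) simp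
    show "bij_betw (\<lambda>i. convex hull (V - {\<sigma> i})) {..CARD('n)} {G. G facet_of convex hull V}"
      using bij_betw_trans[OF \<sigma> bij] by (simp add: comp_def)
    show "\<forall>i\<le>CARD('n). lattice_pt (z (\<sigma> i)) \<and> z (\<sigma> i) \<in> rel_interior (convex hull (V - {\<sigma> i}))"
      using zV \<sigma>V by simp
    show "\<forall>i\<le>CARD('n). \<forall>j\<le>CARD('n). i \<noteq> j \<longrightarrow>
            closed_segment (z (\<sigma> i)) (z (\<sigma> j)) \<inter> shrink \<alpha> f (convex hull V) \<noteq> {}"
      using segV \<sigma>V \<sigma>inj by simp
  qed (use mlf LF fri ri in auto)
qed

section \<open>The lower bound on rho\<close>

lemma interior_absorbing:
  fixes B :: "'a::euclidean_space set"
  assumes "f \<in> interior B"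
  shows "\<exists>t>0. r \<in> (\<lambda>x. t *\<^sub>R x) ` ((\<lambda>y. y - f) ` B)"
proof -
  obtain e where e: "e > 0" "ball f e \<subseteq> B" using assms by (meson mem_interior)
  define t where "t = 2 * norm r / e + 1"
  have t: "t > 0" using e by (simp add: t_def add_nonneg_pos)
  have "norm r < e * t" using e by (simp add: t_def field_simps add_pos_nonneg)
  then have "f + (1/t) *\<^sub>R r \<in> B" using e t by (intro subsetD[OF e(2)]) (simp add: dist_norm field_simps)
  then have "r \<in> (\<lambda>x. t *\<^sub>R x) ` ((\<lambda>y. y - f) ` B)"
    using t by (intro image_eqI[where x = "(1/t) *\<^sub>R r"] image_eqI[where x = "f + (1/t) *\<^sub>R r"]) auto
  with t show ?thesis by blast
qed

lemma gauge_translate_nonneg: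
  fixes B :: "(real^'n) set"
  assumes "f \<in> interior B"
  shows "0 \<le> gauge ((\<lambda>y. y - f) ` B) r"
  unfolding gauge_def using interior_absorbing[OF assms, of r] by (intro cInf_greatest) auto

lemma gauge_translate_le:
  fixes B :: "(real^'n) set"
  assumes "x \<in> B" "t > 0"
  shows "gauge ((\<lambda>y. y - f) ` B) (t *\<^sub>R (x - f)) \<le> t"
  unfolding gauge_def by (rule cInf_lower) (use assms in \<open>auto intro: bdd_belowI[of _ 0]\<close>)

lemma gauge_translate_lt_1_imp_interior:
  fixes B :: "(real^'n) set"
  assumes "convex B" "f \<in> interior B" "gauge ((\<lambda>y. y - f) ` B) r < 1"
  shows "f + r \<in> interior B"
proof -
  let ?S = "{t. t > 0 \<and> r \<in> (\<lambda>x. t *\<^sub>R x) ` ((\<lambda>y. y - f) ` B)}"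
  have ne: "?S \<noteq> {}" using interior_absorbing[OF assms(2), of r] by blast
  have bdd: "bdd_below ?S" by (rule bdd_belowI[of _ 0]) auto
  have "Inf ?S < 1" using assms(3) by (simp add: gauge_def)
  then obtain t where "t \<in> ?S" "t < 1" using cInf_less_iff[OF ne bdd] by blast
  then obtain b where b: "b \<in> B" "t > 0" "t < 1" "r = t *\<^sub>R (b - f)" by auto
  then have "f + r = b - (1 - t) *\<^sub>R (b - f)" by (simp add: algebra_simps)
  also have "\<dots> \<in> interior B" using b assms(1,2) mem_interior_convex_shrink[of B f b "1 - t"] by simp
  finally show ?thesis .
qed

lemma Ccone_subset_imp_interior:
  assumes "f \<in> interior L" "Ccone B 0 r f \<subseteq> scale_set c (Ccone L 0 r f)"
  shows "f \<in> interior B"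
proof (rule ccontr)
  assume "f \<notin> interior B"
  then have "(\<lambda>_. 0) \<in> Ccone B 0 r f" by (simp add: Ccone_def)
  moreover have "Ccone L 0 r f = {}" using assms(1) by (simp add: Ccone_def)
  ultimately show False using assms(2) by (simp add: scale_set_def)
qed

lemma Ccone_subset_imp_gauge_le:
  assumes fB: "f \<in> interior B" and fL: "f \<in> interior L" and "c > 0"
    and sub: "Ccone B 1 (\<lambda>_. r) f \<subseteq> scale_set (1/c) (Ccone L 1 (\<lambda>_. r) f)"
  shows "gauge ((\<lambda>y. y - f) ` B) r \<le> c * gauge ((\<lambda>y. y - f) ` L) r"
proof -
  define gB gL where "gB = gauge ((\<lambda>y. y - f) ` B) r" and "gL = gauge ((\<lambda>y. y - f) ` L) r"
  have "0 \<le> gB" "0 \<le> gL"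
    unfolding gB_def gL_def using fB fL by (simp_all add: gauge_translate_nonneg)
  have "gB \<le> c * gL"
  proof (cases "gB = 0")
    case False
    then have "gB > 0" using \<open>0 \<le> gB\<close> by simp
    define s where "s = (\<lambda>j::nat. if j = 0 then 1 / gB else 0)"
    have "s \<in> Ccone B 1 (\<lambda>_. r) f" using fB \<open>gB > 0\<close> by (simp add: Ccone_def s_def gB_def)
    then obtain s' where s': "s' \<in> Ccone L 1 (\<lambda>_. r) f" "s = (\<lambda>j. (1/c) * s' j)"
      using sub unfolding scale_set_def by blast
    have "s' 0 = c / gB" using fun_cong[OF s'(2), of 0] \<open>c > 0\<close> by (simp add: s_def field_simps)
    moreover have "1 \<le> s' 0 * gL" using s'(1) fL by (simp add: Ccone_def gL_def)
    ultimately have "1 \<le> c / gB * gL" by simp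
    then show ?thesis using \<open>gB > 0\<close> by (simp add: field_simps)
  qed (use \<open>c > 0\<close> \<open>0 \<le> gL\<close> in simp)
  then show ?thesis by (simp add: gB_def gL_def)
qed

lemma Ccone_subset_imp_shrink_subset_interior:
  assumes "convex B" "f \<in> interior L" "0 < c" "c < \<alpha>"
    and sub: "\<forall>k r. Ccone B k r f \<subseteq> scale_set (1/c) (Ccone L k r f)"
  shows "shrink \<alpha> f L \<subseteq> interior B"
proof
  fix p assume "p \<in> shrink \<alpha> f L"
  then obtain q where q: "q \<in> L" "p = (1/\<alpha>) *\<^sub>R q + (1 - 1/\<alpha>) *\<^sub>R f"
    unfolding shrink_def by blast
  define r where "r = (1/\<alpha>) *\<^sub>R (q - f)"
  have fB: "f \<in> interior B" by (rule Ccone_subset_imp_interior[OF assms(2) sub[rule_format]])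
  have "gauge ((\<lambda>y. y - f) ` L) r \<le> 1/\<alpha>"
    unfolding r_def using assms(3,4) by (intro gauge_translate_le q(1)) simp
  have "gauge ((\<lambda>y. y - f) ` B) r \<le> c * gauge ((\<lambda>y. y - f) ` L) r"
    by (rule Ccone_subset_imp_gauge_le[OF fB assms(2,3) sub[rule_format]])
  also have "\<dots> \<le> c * (1/\<alpha>)"
    by (rule mult_left_mono) (use assms(3) \<open>gauge _ r \<le> 1/\<alpha>\<close> in auto)
  also have "\<dots> < 1" using assms(3,4) by (simp add: divide_less_eq)
  finally have "f + r \<in> interior B" by (rule gauge_translate_lt_1_imp_interior[OF assms(1) fB])
  moreover have "f + r = p" using q(2) by (simp add: r_def algebra_simps)
  ultimately show "p \<in> interior B" by simp
qed

lemma interior_polyhedron: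
  fixes B :: "'a::euclidean_space set"
  assumes "polyhedron B" "interior B \<noteq> {}"
  shows "interior B = B - \<Union>{G. G facet_of B}"
  using rel_interior_of_polyhedron[OF assms(1)] rel_interior_nonempty_interior[OF assms(2)] by simp

lemma polyhedron_facet_beyond:
  fixes B :: "'a::euclidean_space set"
  assumes B: "polyhedron B" and fB: "f \<in> interior B" and zB: "z \<notin> interior B"
  shows "\<exists>G. G facet_of B \<and>
    (\<forall>a b. B \<subseteq> {x. a \<bullet> x \<le> b} \<longrightarrow> G = B \<inter> {x. a \<bullet> x = b} \<longrightarrow> b \<le> a \<bullet> z)"
proof -
  have intB: "interior B = B - \<Union>{G. G facet_of B}" using interior_polyhedron B fB by blast
  have "closed_segment f z \<inter> frontier (interior B) \<noteq> {}"
    using fB zB by (intro connected_Int_frontier) auto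
  then obtain w where w: "w \<in> closed_segment f z" "w \<in> frontier (interior B)" by blast
  then have "w \<in> B" "w \<notin> interior B"
    using closure_mono[OF interior_subset, of B] closure_closed[OF polyhedron_imp_closed[OF B]]
    by (auto simp: frontier_def)
  then obtain G where G: "G facet_of B" "w \<in> G" using intB by blast
  obtain u where u: "0 \<le> u" "u \<le> 1" "w = (1 - u) *\<^sub>R f + u *\<^sub>R z"
    using w(1) by (auto simp: closed_segment_def)
  have "b \<le> a \<bullet> z" if hs: "B \<subseteq> {x. a \<bullet> x \<le> b}" and Geq: "G = B \<inter> {x. a \<bullet> x = b}" for a b
  proof -
    have "a \<bullet> w = b" using G Geq by auto
    moreover have "a \<bullet> f < b" using fB intB G(1) hs Geq by fastforce
    ultimately have "u * (a \<bullet> z - b) = (1 - u) * (b - a \<bullet> f)"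
      using u(3) by (simp add: inner_add_right algebra_simps)
    moreover have "0 \<le> (1 - u) * (b - a \<bullet> f)" using u(2) \<open>a \<bullet> f < b\<close> by simp
    ultimately have "0 \<le> u * (a \<bullet> z - b)" by simp
    moreover have "u > 0" using u fB \<open>w \<notin> interior B\<close> by (cases "u = 0") auto
    ultimately show ?thesis by (simp add: zero_le_mult_iff)
  qed
  then show ?thesis using G(1) by blast
qed

lemma polyhedron_few_facets_segment_outside:
  fixes B :: "'a::euclidean_space set"
  assumes B: "polyhedron B" and fB: "f \<in> interior B" and card: "card {G. G facet_of B} \<le> n"
    and z: "\<And>i. i \<le> n \<Longrightarrow> z i \<notin> interior B"
  obtains i j where "i \<le> n" "j \<le> n" "i \<noteq> j" "closed_segment (z i) (z j) \<inter> interior B = {}"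
proof -
  obtain Gf where Gf: "\<And>i. i \<le> n \<Longrightarrow> Gf i facet_of B"
    "\<And>i a b. i \<le> n \<Longrightarrow> B \<subseteq> {x. a \<bullet> x \<le> b} \<Longrightarrow> Gf i = B \<inter> {x. a \<bullet> x = b} \<Longrightarrow> b \<le> a \<bullet> z i"
    using polyhedron_facet_beyond[OF B fB z] by metis
  have "\<not> inj_on Gf {..n}"
  proof
    assume "inj_on Gf {..n}"
    then have "card {..n} \<le> card {G. G facet_of B}"
      using Gf(1) finite_polyhedron_facets[OF B] by (intro card_inj_on_le) auto
    then show False using card by simp
  qed
  then obtain i j where ij: "i \<le> n" "j \<le> n" "i \<noteq> j" "Gf i = Gf j"
    unfolding inj_on_def by auto
  obtain a b where "a \<noteq> 0" and ab: "B \<subseteq> {x. a \<bullet> x \<le> b}" "Gf i = B \<inter> {x. a \<bullet> x = b}"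
    by (rule facet_of_polyhedron[OF B Gf(1)[OF ij(1)]])
  have "closed_segment (z i) (z j) \<subseteq> {x. b \<le> a \<bullet> x}"
    using Gf(2)[OF ij(1) ab] Gf(2)[OF ij(2) ab[unfolded ij(4)]]
    by (intro closed_segment_subset convex_halfspace_ge) auto
  moreover have "\<not> b \<le> a \<bullet> x" if "x \<in> interior B" for x
  proof -
    have "x \<in> B" "x \<notin> Gf i" using that interior_polyhedron[OF B] fB Gf(1)[OF ij(1)] by blast+
    then show ?thesis using ab by auto
  qed
  ultimately show thesis using that[OF ij(1-3)] by blast
qed

lemma good_simplex_rho_ge:
  fixes f :: "real^'n" and B L :: "(real^'n) set"
  assumes "good_simplex \<alpha> f L" "B \<in> LF_poly CARD('n)"
  shows "ereal \<alpha> \<le> rho f B L"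
proof -
  from assms(1) have fL: "f \<in> interior L" by (simp add: good_simplex_def)
  from assms(1) obtain F z where z: "\<forall>i\<le>CARD('n). lattice_pt (z i) \<and> z i \<in> rel_interior (F i)"
    and seg: "\<forall>i\<le>CARD('n). \<forall>j\<le>CARD('n). i \<noteq> j \<longrightarrow> closed_segment (z i) (z j) \<inter> shrink \<alpha> f L \<noteq> {}"
    unfolding good_simplex_def by blast
  have B: "lattice_free B" "polyhedron B" "card {G. G facet_of B} \<le> CARD('n)"
    using assms(2) by (auto simp: LF_poly_def)
  have "\<alpha> \<le> c" if "c > 0" and sub: "\<forall>k r. Ccone B k r f \<subseteq> scale_set (1/c) (Ccone L k r f)" for c
  proof (rule ccontr)
    assume "\<not> \<alpha> \<le> c"
    moreover have "convex B" using B(1) by (simp add: lattice_free_def)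
    ultimately have "shrink \<alpha> f L \<subseteq> interior B"
      using Ccone_subset_imp_shrink_subset_interior[OF _ fL \<open>c > 0\<close> _ sub] by simp
    have fB: "f \<in> interior B" by (rule Ccone_subset_imp_interior[OF fL sub[rule_format]])
    have "z i \<notin> interior B" if "i \<le> CARD('n)" for i
      using z that B(1) by (auto simp: lattice_free_def)
    then obtain i j where "i \<le> CARD('n)" "j \<le> CARD('n)" "i \<noteq> j"
        "closed_segment (z i) (z j) \<inter> interior B = {}"
      by (rule polyhedron_few_facets_segment_outside[OF B(2) fB B(3)])
    with seg \<open>shrink \<alpha> f L \<subseteq> interior B\<close> show False by blast
  qed
  then show ?thesis unfolding rho_def by (intro Inf_greatest) auto
qed

section \<open>Unimodular normal form of a rational point\<close>

definition unimodular :: "(real^'n \<Rightarrow> real^'n) \<Rightarrow> (real^'n \<Rightarrow> real^'n) \<Rightarrow> bool" where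
  "unimodular U U' \<longleftrightarrow> linear U \<and> linear U' \<and> (\<forall>y. U (U' y) = y) \<and> (\<forall>y. U' (U y) = y) \<and>
     (\<forall>x. lattice_pt x \<longrightarrow> lattice_pt (U x)) \<and> (\<forall>x. lattice_pt x \<longrightarrow> lattice_pt (U' x))"

lemma unimodular_id: "unimodular id id"
  by (simp add: unimodular_def linear_id)

lemma unimodular_comp: "unimodular U U' \<Longrightarrow> unimodular V V' \<Longrightarrow> unimodular (V \<circ> U) (U' \<circ> V')"
  by (simp add: unimodular_def linear_compose)

definition shear :: "real \<Rightarrow> 'n \<Rightarrow> 'n \<Rightarrow> real^'n \<Rightarrow> real^'n" where
  "shear s i j x = x + (s * x$j) *\<^sub>R axis i 1"

lemma shear_nth: "shear s i j x $ l = x $ l + (if l = i then s * x $ j else 0)"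
  by (simp add: shear_def axis_def)

lemma linear_shear: "linear (shear s i j)"
  by (rule linearI) (simp_all add: vec_eq_iff shear_nth algebra_simps)

lemma unimodular_shear:
  assumes "i \<noteq> j" "s \<in> \<int>"
  shows "unimodular (shear s i j) (shear (-s) i j)"
  unfolding unimodular_def
proof (intro conjI allI impI)
  show "linear (shear s i j)" "linear (shear (-s) i j)" by (rule linear_shear)+
  show "shear s i j (shear (- s) i j y) = y" "shear (-s) i j (shear s i j y) = y" for y
    using assms by (simp_all add: vec_eq_iff shear_nth)
  show "lattice_pt (shear s i j x)" "lattice_pt (shear (-s) i j x)" if "lattice_pt x" for x
    using that assms by (auto simp: lattice_pt_def shear_nth)
qed

definition abs_sum :: "real^'n \<Rightarrow> nat" where
  "abs_sum p = (\<Sum>i\<in>UNIV. nat \<lfloor>\<bar>p$i\<bar>\<rfloor>)"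

lemma nat_floor_abs_less:
  fixes x y :: real
  assumes "y \<in> \<int>" "\<bar>x\<bar> < \<bar>y\<bar>"
  shows "nat \<lfloor>\<bar>x\<bar>\<rfloor> < nat \<lfloor>\<bar>y\<bar>\<rfloor>"
proof -
  obtain m where "y = of_int m" using assms(1) Ints_cases by metis
  then have "\<lfloor>\<bar>x\<bar>\<rfloor> < \<lfloor>\<bar>y\<bar>\<rfloor>" using assms(2) by (simp add: floor_less_iff)
  then show ?thesis by (intro iffD2[OF nat_less_eq_zless]) simp_all
qed

lemma shear_decreases_abs_sum:
  assumes p: "lattice_pt p" and ij: "i \<noteq> j" "p$j \<noteq> 0" "\<bar>p$j\<bar> \<le> \<bar>p$i\<bar>"
  obtains s where "s \<in> \<int>" "abs_sum (shear s i j p) < abs_sum p"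
proof -
  define s :: real where "s = (if (p$i > 0) = (p$j > 0) then -1 else 1)"
  have "\<bar>p$i + s * p$j\<bar> < \<bar>p$i\<bar>" using ij by (auto simp: s_def abs_if)
  then have lt: "nat \<lfloor>\<bar>shear s i j p $ i\<bar>\<rfloor> < nat \<lfloor>\<bar>p$i\<bar>\<rfloor>"
    using p by (intro nat_floor_abs_less) (simp_all add: lattice_pt_def shear_nth)
  have "nat \<lfloor>\<bar>shear s i j p $ l\<bar>\<rfloor> \<le> nat \<lfloor>\<bar>p$l\<bar>\<rfloor>" for l
  proof (cases "l = i")
    case True
    show ?thesis unfolding True by (rule less_imp_le[OF lt])
  qed (simp add: shear_nth)
  with lt have "abs_sum (shear s i j p) < abs_sum p"
    unfolding abs_sum_def by (intro sum_strict_mono_ex1) auto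
  moreover have "s \<in> \<int>" by (simp add: s_def)
  ultimately show thesis by (rule that[rotated])
qed

lemma lattice_pt_unimodular_to_axis:
  fixes p :: "real^'n"
  assumes "lattice_pt p"
  shows "\<exists>U U' k c. unimodular U U' \<and> U p = c *\<^sub>R axis k 1"
  using assms
proof (induction "abs_sum p" arbitrary: p rule: less_induct)
  case less
  show ?case
  proof (cases "\<exists>i j. i \<noteq> j \<and> p$i \<noteq> 0 \<and> p$j \<noteq> 0")
    case False
    then obtain k where "\<forall>l. l \<noteq> k \<longrightarrow> p$l = 0" by metis
    then have "id p = (p$k) *\<^sub>R axis k 1" by (auto simp: vec_eq_iff axis_def)
    then show ?thesis using unimodular_id by blast
  next
    case True
    then obtain i j where ij: "i \<noteq> j" "p$i \<noteq> 0" "p$j \<noteq> 0" "\<bar>p$j\<bar> \<le> \<bar>p$i\<bar>"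
      by (metis linear)
    obtain s where s: "s \<in> \<int>" "abs_sum (shear s i j p) < abs_sum p"
      using shear_decreases_abs_sum[OF less.prems ij(1,3,4)] by blast
    have "lattice_pt (shear s i j p)"
      using less.prems unimodular_shear[OF ij(1) s(1)] by (simp add: unimodular_def)
    then obtain U U' k c where "unimodular U U'" "U (shear s i j p) = c *\<^sub>R axis k 1"
      using less.hyps s(2) by blast
    then show ?thesis using unimodular_comp[OF unimodular_shear[OF ij(1) s(1)]] by (metis comp_apply)
  qed
qed

lemma rational_vector_common_denominator:
  fixes f :: "real^'n"
  assumes "\<forall>i. f $ i \<in> \<rat>"
  obtains q :: int where "q > 0" "\<forall>i. of_int q * f$i \<in> \<int>"
proof -
  have "\<exists>a b. b > 0 \<and> f$i = of_int a / of_int b" for i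
    using assms Rats_cases' by metis
  then obtain a b :: "'n \<Rightarrow> int" where ab: "\<And>i. b i > 0" "\<And>i. f$i = of_int (a i) / of_int (b i)"
    by metis
  define q where "q = (\<Prod>i\<in>UNIV. b i)"
  have "q > 0" unfolding q_def using ab(1) by (simp add: prod_pos)
  moreover have "of_int q * f$i \<in> \<int>" for i
  proof -
    have "q = b i * (\<Prod>l\<in>UNIV - {i}. b l)" unfolding q_def by (rule prod.remove) auto
    then have "of_int q * f$i = of_int (a i * (\<Prod>l\<in>UNIV - {i}. b l))"
      using ab(1)[of i] ab(2)[of i] by (simp add: field_simps)
    then show ?thesis by (metis Ints_of_int)
  qed
  ultimately show thesis using that by blast
qed

locale lattice_frame =
  fixes coord :: "'n \<Rightarrow> real^'n \<Rightarrow> real" and bvec :: "'n \<Rightarrow> real^'n"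
  assumes linear_coord: "linear (coord j)"
    and coord_lattice: "lattice_pt x \<Longrightarrow> coord j x \<in> \<int>"
    and lattice_bvec: "lattice_pt (bvec j)"
    and coord_bvec: "coord j (bvec l) = (if j = l then 1 else 0)"
begin

lemma coord_add: "coord j (x + y) = coord j x + coord j y"
  by (rule linear_add[OF linear_coord])

lemma coord_diff: "coord j (x - y) = coord j x - coord j y"
  by (rule linear_diff[OF linear_coord])

lemma coord_scale: "coord j (c *\<^sub>R x) = c * coord j x"
  using linear_scale[OF linear_coord] by simp

lemma affine_coord_level: "affine {x. coord j x = c}"
  unfolding affine_def by (auto simp: coord_add coord_scale simp flip: distrib_right)

definition coord_subspace :: "'n set \<Rightarrow> (real^'n) set" where
  "coord_subspace D = {x. \<forall>j. j \<notin> D \<longrightarrow> coord j x = 0}"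

lemma lattice_free_open_segment_bvec:
  assumes "m \<in> \<int>" "x \<in> open_segment (m *\<^sub>R bvec k) ((m + 1) *\<^sub>R bvec k)"
  shows "\<not> lattice_pt x"
proof
  assume "lattice_pt x"
  obtain t where t: "0 < t" "t < 1" "x = (1 - t) *\<^sub>R (m *\<^sub>R bvec k) + t *\<^sub>R ((m + 1) *\<^sub>R bvec k)"
    using assms(2) by (auto simp: in_segment)
  then have "coord k x = (1 - t) * m + t * (m + 1)" by (simp add: coord_add coord_scale coord_bvec)
  then have "t = coord k x - m" by (simp add: algebra_simps)
  then have "t \<in> \<int>" using coord_lattice[OF \<open>lattice_pt x\<close>] assms(1) by simp
  then show False using t(1,2) by (auto elim!: Ints_cases)
qed

end

lemma rational_point_lattice_frame:
  fixes f :: "real^'n"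
  assumes "\<forall>i. f $ i \<in> \<rat>" "\<not> lattice_pt f"
  obtains coord bvec k \<gamma> where "lattice_frame coord bvec" "f = \<gamma> *\<^sub>R bvec k" "\<gamma> \<notin> \<int>"
proof -
  obtain q :: int where q: "q > 0" "\<forall>i. of_int q * f$i \<in> \<int>"
    by (rule rational_vector_common_denominator[OF assms(1)])
  have "lattice_pt (of_int q *\<^sub>R f)" using q(2) by (simp add: lattice_pt_def)
  then obtain U U' k c where UU: "unimodular U U'" and Uqf: "U (of_int q *\<^sub>R f) = c *\<^sub>R axis k 1"
    using lattice_pt_unimodular_to_axis by blast
  have lin: "linear U" "linear U'" using UU by (simp_all add: unimodular_def)
  define \<gamma> where "\<gamma> = c / of_int q"
  have "of_int q *\<^sub>R U f = c *\<^sub>R axis k 1" using Uqf by (simp add: linear_scale[OF lin(1)])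
  moreover have "U f = (1 / of_int q) *\<^sub>R (of_int q *\<^sub>R U f)" using q(1) by simp
  ultimately have "U f = \<gamma> *\<^sub>R axis k 1" by (simp add: \<gamma>_def)
  then have f: "f = \<gamma> *\<^sub>R U' (axis k 1)"
    using UU by (metis linear_scale[OF lin(2)] unimodular_def)
  have "linear (\<lambda>x. U x $ j)" for j
    by (rule linearI) (simp_all add: linear_add[OF lin(1)] linear_scale[OF lin(1)])
  moreover have "U x $ j \<in> \<int>" if "lattice_pt x" for x j
    using that UU by (simp add: unimodular_def lattice_pt_def)
  moreover have "lattice_pt (U' (axis j 1))" for j
    using UU by (simp add: unimodular_def lattice_pt_def axis_def)
  moreover have "U (U' (axis l 1)) $ j = (if j = l then 1 else 0)" for j l
    using UU by (simp add: unimodular_def axis_def)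
  ultimately have frame: "lattice_frame (\<lambda>j x. U x $ j) (\<lambda>j. U' (axis j 1))"
    by (simp add: lattice_frame_def)
  have "\<gamma> \<notin> \<int>"
  proof
    assume "\<gamma> \<in> \<int>"
    then have "lattice_pt f"
      using frame unfolding f lattice_frame_def lattice_pt_def by simp
    then show False using assms(2) by blast
  qed
  with frame f show thesis by (rule that)
qed

section \<open>Construction of the simplex\<close>

locale simplex_construction = lattice_frame coord bvec
  for coord :: "'n \<Rightarrow> real^'n \<Rightarrow> real" and bvec +
  fixes f :: "real^'n" and k :: 'n and \<gamma> \<alpha> :: real
  assumes f_eq: "f = \<gamma> *\<^sub>R bvec k" and gamma_not_int: "\<gamma> \<notin> \<int>" and alpha_gt_1: "1 < \<alpha>"
begin

lemma coord_f: "coord j f = (if j = k then \<gamma> else 0)"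
  by (simp add: f_eq coord_scale coord_bvec)

text \<open>K = (1 + eps) / eps makes every point of the old
  simplex the same convex combination of the apex and its own lift; K > alpha makes the new
  segments pass through the shrunken simplex.\<close>

definition eps :: real where "eps = 1 / (2 * \<alpha>)"

definition K :: real where "K = (1 + eps) / eps"

lemma eps_pos: "0 < eps" and eps_lt_1: "eps < 1"
  using alpha_gt_1 by (simp_all add: eps_def)

lemma K_eq: "K = 1 + 2 * \<alpha>"
  using alpha_gt_1 by (simp add: K_def eps_def field_simps)

lemma K_gt_alpha: "\<alpha> < K"
  using alpha_gt_1 by (simp add: K_eq)

definition lift :: "'n \<Rightarrow> real^'n \<Rightarrow> real^'n" where
  "lift j x = f + K *\<^sub>R (x - f) + bvec j"

definition apex :: "'n \<Rightarrow> real^'n" where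
  "apex j = f - eps *\<^sub>R bvec j"

definition apex_weight :: real where
  "apex_weight = 1 / (1 + eps)"

lemma apex_weight: "0 < apex_weight" "apex_weight < 1"
  using eps_pos by (auto simp: apex_weight_def)

lemma apex_lift_combination: "apex_weight *\<^sub>R apex j + (1 - apex_weight) *\<^sub>R lift j y = y"
proof -
  have "0 < eps + eps * eps" using eps_pos by (simp add: add_pos_pos)
  then have "(1 - apex_weight) * K = 1" "1 - apex_weight = apex_weight * eps"
    using eps_pos by (auto simp: apex_weight_def K_def field_simps)
  moreover have "apex_weight *\<^sub>R apex j + (1 - apex_weight) *\<^sub>R lift j y =
      f + ((1 - apex_weight) * K) *\<^sub>R (y - f) + ((1 - apex_weight) - apex_weight * eps) *\<^sub>R bvec j"
    by (simp add: apex_def lift_def algebra_simps)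
  ultimately show ?thesis by simp
qed

lemma lift_affinity: "lift j = (\<lambda>x. (f - K *\<^sub>R f + bvec j) + K *\<^sub>R x)"
  by (rule ext) (simp add: lift_def algebra_simps)

lemma K_nonzero: "K \<noteq> 0"
  using K_gt_alpha alpha_gt_1 by simp

lemma convex_hull_lift: "convex hull (lift j ` X) = lift j ` (convex hull X)"
  unfolding lift_affinity by (rule convex_hull_affinity)

lemma rel_interior_convex_hull_lift:
  "rel_interior (convex hull (lift j ` X)) = lift j ` rel_interior (convex hull X)"
  unfolding convex_hull_lift unfolding lift_affinity by (rule rel_interior_affinity[OF K_nonzero])

lemma affine_independent_lift: "\<not> affine_dependent X \<Longrightarrow> \<not> affine_dependent (lift j ` X)"
  unfolding lift_affinity by (rule affine_independent_affinity[OF K_nonzero])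

lemma inj_lift: "inj (lift j)"
  by (rule injI) (simp add: lift_def K_nonzero)

lemma coord_lift: "coord l (lift j x) = coord l f + K * (coord l x - coord l f) + coord l (bvec j)"
  by (simp add: lift_def coord_add coord_diff coord_scale)

lemma coord_apex: "coord l (apex j) = coord l f - eps * coord l (bvec j)"
  by (simp add: apex_def coord_diff coord_scale)

lemma lift_toward_f: "lift j (f + (1/K) *\<^sub>R (x - f)) = x + bvec j"
  using K_nonzero by (simp add: lift_def)

lemma shrink_lift:
  "(1 - 1/\<alpha>) *\<^sub>R x + (1/\<alpha>) *\<^sub>R (y + bvec j) =
     (1/\<alpha>) *\<^sub>R lift j (f + (\<alpha> / K) *\<^sub>R (((\<alpha> - 1)/\<alpha>) *\<^sub>R x + (1/\<alpha>) *\<^sub>R y - f)) + (1 - 1/\<alpha>) *\<^sub>R f"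
proof -
  define m where "m = ((\<alpha> - 1)/\<alpha>) *\<^sub>R x + (1/\<alpha>) *\<^sub>R y"
  have "lift j (f + (\<alpha> / K) *\<^sub>R (m - f)) = f + \<alpha> *\<^sub>R (m - f) + bvec j"
    using K_nonzero by (simp add: lift_def)
  moreover have "\<alpha> *\<^sub>R m = (\<alpha> - 1) *\<^sub>R x + y" using alpha_gt_1 by (simp add: m_def scaleR_add_right)
  ultimately have "\<alpha> *\<^sub>R ((1/\<alpha>) *\<^sub>R lift j (f + (\<alpha> / K) *\<^sub>R (m - f)) + (1 - 1/\<alpha>) *\<^sub>R f) =
      \<alpha> *\<^sub>R ((1 - 1/\<alpha>) *\<^sub>R x + (1/\<alpha>) *\<^sub>R (y + bvec j))"
    using alpha_gt_1 by (simp add: scaleR_add_right scaleR_diff_right algebra_simps)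
  then show ?thesis using alpha_gt_1 by (simp add: m_def)
qed

lemma witnessed_segment: "\<exists>V z. witnessed_simplex \<alpha> f V z \<and> card V = 2 \<and> V \<subseteq> coord_subspace {k}"
proof -
  define m :: real where "m = of_int \<lfloor>\<gamma>\<rfloor>"
  define a b where "a = m *\<^sub>R bvec k" and "b = (m + 1) *\<^sub>R bvec k"
  have "m \<le> \<gamma>" "m \<noteq> \<gamma>" using gamma_not_int by (auto simp: m_def)
  then have m: "m \<in> \<int>" "m < \<gamma>" "\<gamma> < m + 1" by (auto simp: m_def intro: order.not_eq_order_implies_strict)
  have ca: "coord l a = (if l = k then m else 0)" and cb: "coord l b = (if l = k then m + 1 else 0)" for l
    by (simp_all add: a_def b_def coord_scale coord_bvec)
  have ab: "a \<noteq> b" using ca[of k] cb[of k] by auto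
  have ri: "rel_interior (convex hull {a, b}) = open_segment a b"
    using ab by (simp add: segment_convex_hull[symmetric] rel_interior_closed_segment)
  have lat: "lattice_pt a" "lattice_pt b"
    using lattice_bvec m(1) by (auto simp: a_def b_def lattice_pt_def)
  have "f = (1 - (\<gamma> - m)) *\<^sub>R a + (\<gamma> - m) *\<^sub>R b"
    by (simp add: f_eq a_def b_def algebra_simps)
  then have fab: "f \<in> open_segment a b"
    unfolding in_segment(2) using ab m by (intro conjI exI[of _ "\<gamma> - m"]) auto
  define z where "z v = (if v = a then b else a)" for v
  have "witnessed_simplex \<alpha> f {a, b} z"
    unfolding witnessed_simplex_def
  proof (intro conjI ballI impI)
    show "\<not> affine_dependent {a, b}" by simp
    show "f \<in> rel_interior (convex hull {a, b})" using fab ri by simp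
    show "\<not> lattice_pt x" if "x \<in> rel_interior (convex hull {a, b})" for x
      using that ri lattice_free_open_segment_bvec[OF m(1)] by (simp add: a_def b_def)
    show "lattice_pt (z v)" "z v \<in> rel_interior (convex hull ({a, b} - {v}))" if "v \<in> {a, b}" for v
      using that lat ab by (auto simp: z_def insert_Diff_if)
    show "closed_segment (z v) (z v') \<inter> shrink \<alpha> f (convex hull {a, b}) \<noteq> {}"
      if "v \<in> {a, b}" "v' \<in> {a, b}" "v \<noteq> v'" for v v'
    proof -
      have "f \<in> closed_segment (z v) (z v')"
        using that fab open_closed_segment by (auto simp: z_def closed_segment_commute)
      moreover have "f \<in> shrink \<alpha> f (convex hull {a, b})"
        using fab ri rel_interior_subset by (intro self_in_shrink) blast
      ultimately show ?thesis by blast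
    qed
  qed
  moreover have "card {a, b} = 2" "{a, b} \<subseteq> coord_subspace {k}"
    using ab ca cb by (auto simp: coord_subspace_def)
  ultimately show ?thesis by blast
qed

lemma rel_interior_pyramid:
  assumes "W \<noteq> {}"
  shows "rel_interior (convex hull (insert (apex j) (lift j ` W))) =
    {u *\<^sub>R apex j + (1 - u) *\<^sub>R lift j y | u y. 0 < u \<and> u < 1 \<and> y \<in> rel_interior (convex hull W)}"
  using assms by (auto simp: rel_interior_convex_hull_insert rel_interior_convex_hull_lift)

lemma rel_interior_subset_pyramid:
  assumes "W \<noteq> {}"
  shows "rel_interior (convex hull W) \<subseteq> rel_interior (convex hull (insert (apex j) (lift j ` W)))"
  unfolding rel_interior_pyramid[OF assms] using apex_weight apex_lift_combination[symmetric] by blast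

end

locale simplex_extension = simplex_construction coord bvec f k \<gamma> \<alpha>
  for coord :: "'n \<Rightarrow> real^'n \<Rightarrow> real" and bvec f k \<gamma> \<alpha> +
  fixes D :: "'n set" and V :: "(real^'n) set" and z :: "real^'n \<Rightarrow> real^'n" and j :: 'n
  assumes witnessed: "witnessed_simplex \<alpha> f V z"
    and card_V: "card V = card D + 1" and V_subspace: "V \<subseteq> coord_subspace D"
    and j_notin_D: "j \<notin> D" and k_in_D: "k \<in> D"
begin

lemma affine_independent_V: "\<not> affine_dependent V"
  using witnessed by (simp add: witnessed_simplex_def)

lemma f_rel_interior_V: "f \<in> rel_interior (convex hull V)"
  using witnessed by (simp add: witnessed_simplex_def)

lemma lattice_free_V: "x \<in> rel_interior (convex hull V) \<Longrightarrow> \<not> lattice_pt x"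
  using witnessed by (simp add: witnessed_simplex_def)

lemma witness_V: "v \<in> V \<Longrightarrow> lattice_pt (z v) \<and> z v \<in> rel_interior (convex hull (V - {v}))"
  using witnessed by (simp add: witnessed_simplex_def)

lemma segments_V:
  "v \<in> V \<Longrightarrow> v' \<in> V \<Longrightarrow> v \<noteq> v' \<Longrightarrow> closed_segment (z v) (z v') \<inter> shrink \<alpha> f (convex hull V) \<noteq> {}"
  using witnessed by (simp add: witnessed_simplex_def)

lemma finite_V: "finite V"
  using affine_independent_V aff_independent_finite by blast

lemma two_le_card_V: "2 \<le> card V"
  using card_V k_in_D card_gt_0_iff[of D] by auto

lemma witness_in_hull: "v \<in> V \<Longrightarrow> z v \<in> convex hull V"
  using witness_V rel_interior_subset hull_mono[of "V - {v}" V] by blast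

lemma f_in_hull: "f \<in> convex hull V"
  using f_rel_interior_V rel_interior_subset by blast

lemma j_neq_k: "j \<noteq> k"
  using j_notin_D k_in_D by blast

lemma coord_j_hull: "x \<in> convex hull V \<Longrightarrow> coord j x = 0"
proof -
  have "V \<subseteq> {x. coord j x = 0}" using V_subspace j_notin_D by (auto simp: coord_subspace_def)
  then have "convex hull V \<subseteq> {x. coord j x = 0}"
    using affine_imp_convex[OF affine_coord_level] by (rule hull_minimal)
  then show "x \<in> convex hull V \<Longrightarrow> coord j x = 0" by blast
qed

lemma coord_j_lift: "x \<in> convex hull V \<Longrightarrow> coord j (lift j x) = 1"
  using coord_j_hull j_neq_k by (simp add: coord_lift coord_f coord_bvec)

lemma coord_j_apex: "coord j (apex j) = - eps"
  using j_neq_k by (simp add: coord_apex coord_f coord_bvec)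

definition pyramid :: "(real^'n) set" where
  "pyramid = insert (apex j) (lift j ` V)"

lemma apex_notin_lift_hull: "apex j \<notin> lift j ` (convex hull V)"
proof
  assume "apex j \<in> lift j ` (convex hull V)"
  then obtain x where "x \<in> convex hull V" "apex j = lift j x" by blast
  then have "coord j (apex j) = 1" using coord_j_lift by simp
  then show False using coord_j_apex eps_pos by simp
qed

lemma affine_independent_pyramid: "\<not> affine_dependent pyramid"
proof -
  have "lift j ` V \<subseteq> {x. coord j x = 1}" using coord_j_lift[OF hull_inc] by auto
  then have "affine hull (lift j ` V) \<subseteq> {x. coord j x = 1}"
    using affine_coord_level by (rule hull_minimal)
  then have "apex j \<notin> affine hull (lift j ` V)" using coord_j_apex eps_pos by auto
  then show ?thesis unfolding pyramid_def
    using affine_independent_insert affine_independent_lift[OF affine_independent_V] by blast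
qed

lemma card_pyramid: "card pyramid = card (insert j D) + 1"
proof -
  have "apex j \<notin> lift j ` V" using apex_notin_lift_hull hull_subset[of V convex] by blast
  moreover have "card (lift j ` V) = card V" using inj_lift by (simp add: card_image inj_on_def inj_def)
  ultimately show ?thesis using finite_V card_V j_notin_D by (simp add: pyramid_def)
qed

lemma pyramid_subspace: "pyramid \<subseteq> coord_subspace (insert j D)"
proof -
  have "coord l x = 0" if x: "x \<in> pyramid" and l: "l \<notin> insert j D" for x l
  proof -
    have "coord l f = 0" "coord l (bvec j) = 0" using l k_in_D by (auto simp: coord_f coord_bvec)
    moreover have "coord l v = 0" if "v \<in> V" for v
      using that l V_subspace by (auto simp: coord_subspace_def)
    ultimately show ?thesis using x by (auto simp: pyramid_def coord_apex coord_lift)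
  qed
  then show ?thesis by (auto simp: coord_subspace_def)
qed

lemma lift_hull_subset_pyramid: "lift j ` (convex hull V) \<subseteq> convex hull pyramid"
proof -
  have "lift j ` V \<subseteq> pyramid" by (auto simp: pyramid_def)
  then show ?thesis unfolding convex_hull_lift[symmetric] by (rule hull_mono)
qed

lemma hull_subset_pyramid: "convex hull V \<subseteq> convex hull pyramid"
proof
  fix y assume "y \<in> convex hull V"
  then have "lift j y \<in> convex hull pyramid" using lift_hull_subset_pyramid by blast
  moreover have "apex j \<in> convex hull pyramid" by (simp add: pyramid_def hull_inc)
  ultimately have "apex_weight *\<^sub>R apex j + (1 - apex_weight) *\<^sub>R lift j y \<in> convex hull pyramid"
    using apex_weight by (intro convexD[OF convex_convex_hull]) auto
  then show "y \<in> convex hull pyramid" by (simp add: apex_lift_combination)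
qed

lemma V_nonempty: "V \<noteq> {}"
  using two_le_card_V by auto

lemma f_rel_interior_pyramid: "f \<in> rel_interior (convex hull pyramid)"
  using rel_interior_subset_pyramid[OF V_nonempty] f_rel_interior_V by (auto simp: pyramid_def)

lemma lattice_free_pyramid:
  assumes x: "x \<in> rel_interior (convex hull pyramid)"
  shows "\<not> lattice_pt x"
proof
  assume "lattice_pt x"
  obtain u y where uy: "0 < u" "u < 1" "y \<in> rel_interior (convex hull V)"
    and x_eq: "x = u *\<^sub>R apex j + (1 - u) *\<^sub>R lift j y"
    using x unfolding pyramid_def rel_interior_pyramid[OF V_nonempty] by blast
  have cx: "coord j x = (1 - u) - u * eps"
    using uy(3) rel_interior_subset coord_j_lift coord_j_apex
    by (auto simp: x_eq coord_add coord_scale)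
  have "0 < u * eps" "u * eps < u"
    using uy(1) eps_pos eps_lt_1 mult_strict_left_mono[of eps 1 u] by simp_all
  then have "\<bar>coord j x\<bar> < 1" unfolding cx abs_less_iff using uy(1,2) by linarith
  then have "coord j x = 0" using coord_lattice[OF \<open>lattice_pt x\<close>] Ints_nonzero_abs_less1 by blast
  then have "u = apex_weight" using cx eps_pos by (simp add: apex_weight_def field_simps)
  then have "x = y" using x_eq apex_lift_combination by simp
  then show False using lattice_free_V uy(3) \<open>lattice_pt x\<close> by blast
qed

definition pyramid_witness :: "real^'n \<Rightarrow> real^'n" where
  "pyramid_witness x = (if x = apex j then z (SOME v. v \<in> V) + bvec j else z (inv (lift j) x))"

lemma pyramid_witness_apex:
  obtains v where "v \<in> V" "pyramid_witness (apex j) = z v + bvec j"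
  using V_nonempty some_in_eq by (auto simp: pyramid_witness_def)

lemma lift_neq_apex: "v \<in> V \<Longrightarrow> lift j v \<noteq> apex j"
  using apex_notin_lift_hull hull_inc[of v V] by (metis image_eqI)

lemma pyramid_witness_lift: "v \<in> V \<Longrightarrow> pyramid_witness (lift j v) = z v"
  using lift_neq_apex inj_lift by (simp add: pyramid_witness_def inv_f_f)

lemma lift_witness_rel_interior:
  assumes "v \<in> V"
  shows "z v + bvec j \<in> rel_interior (convex hull (lift j ` V))"
proof -
  have "0 < 1 - 1/K" "1 - 1/K \<le> 1" using K_gt_alpha alpha_gt_1 by simp_all
  then have "z v - (1 - 1/K) *\<^sub>R (z v - f) \<in> rel_interior (convex hull V)"
    using witness_in_hull[OF assms] closure_subset f_rel_interior_V
    by (intro rel_interior_closure_convex_shrink) auto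
  moreover have "z v - (1 - 1/K) *\<^sub>R (z v - f) = f + (1/K) *\<^sub>R (z v - f)"
    by (simp add: algebra_simps)
  ultimately show ?thesis
    using lift_toward_f rel_interior_convex_hull_lift by (metis image_eqI)
qed

lemma pyramid_witness_facet:
  assumes x: "x \<in> pyramid"
  shows "lattice_pt (pyramid_witness x) \<and> pyramid_witness x \<in> rel_interior (convex hull (pyramid - {x}))"
proof (cases "x = apex j")
  case True
  obtain v where v: "v \<in> V" and apex: "pyramid_witness (apex j) = z v + bvec j"
    by (rule pyramid_witness_apex)
  have "pyramid - {x} = lift j ` V"
    using True lift_neq_apex by (auto simp: pyramid_def)
  moreover have "lattice_pt (z v + bvec j)"
    using witness_V[OF v] lattice_bvec by (simp add: lattice_pt_def)
  ultimately show ?thesis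
    using True apex lift_witness_rel_interior[OF v] by simp
next
  case False
  then obtain v where v: "v \<in> V" "x = lift j v" using x by (auto simp: pyramid_def)
  have facet: "pyramid - {x} = insert (apex j) (lift j ` (V - {v}))"
    using v False inj_lift by (auto simp: pyramid_def inj_def)
  have "V - {v} \<noteq> {}"
  proof
    assume "V - {v} = {}"
    then have "card V \<le> card {v}" using finite_V by (intro card_mono) auto
    then show False using two_le_card_V by simp
  qed
  then have "z v \<in> rel_interior (convex hull (pyramid - {x}))"
    using witness_V[OF v(1)] rel_interior_subset_pyramid[of "V - {v}" j] unfolding facet by blast
  then show ?thesis using witness_V[OF v(1)] pyramid_witness_lift[OF v(1)] v(2) by simp
qed

text \<open>The point at 1/alpha of the segment is the shrunken image of the lift of a point on the
  way from f to the old simplex at parameter alpha / K; this is where alpha < K is needed.\<close>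

lemma lift_witness_segment:
  assumes v: "v \<in> V" and v1: "v1 \<in> V"
  shows "closed_segment (z v) (z v1 + bvec j) \<inter> shrink \<alpha> f (convex hull pyramid) \<noteq> {}"
proof -
  define p where "p = (1 - 1/\<alpha>) *\<^sub>R z v + (1/\<alpha>) *\<^sub>R (z v1 + bvec j)"
  have "p \<in> closed_segment (z v) (z v1 + bvec j)"
    unfolding in_segment(1) p_def using alpha_gt_1 by (intro exI[of _ "1/\<alpha>"]) auto
  moreover have "p \<in> shrink \<alpha> f (convex hull pyramid)"
  proof -
    define m where "m = ((\<alpha> - 1)/\<alpha>) *\<^sub>R z v + (1/\<alpha>) *\<^sub>R z v1"
    have "m \<in> convex hull V" unfolding m_def
      using alpha_gt_1 witness_in_hull[OF v] witness_in_hull[OF v1]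
      by (intro convexD[OF convex_convex_hull]) (auto simp: diff_divide_distrib)
    then have "(1 - \<alpha>/K) *\<^sub>R f + (\<alpha>/K) *\<^sub>R m \<in> convex hull V"
      using f_in_hull alpha_gt_1 K_gt_alpha by (intro convexD[OF convex_convex_hull]) auto
    moreover have "(1 - \<alpha>/K) *\<^sub>R f + (\<alpha>/K) *\<^sub>R m = f + (\<alpha> / K) *\<^sub>R (m - f)"
      by (simp add: algebra_simps)
    ultimately have "lift j (f + (\<alpha> / K) *\<^sub>R (m - f)) \<in> convex hull pyramid"
      using lift_hull_subset_pyramid by auto
    moreover have "p = (1/\<alpha>) *\<^sub>R lift j (f + (\<alpha> / K) *\<^sub>R (m - f)) + (1 - 1/\<alpha>) *\<^sub>R f"
      unfolding p_def m_def by (rule shrink_lift)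
    ultimately show ?thesis unfolding shrink_def by blast
  qed
  ultimately show ?thesis by blast
qed

lemma pyramid_witness_segments:
  assumes x: "x \<in> pyramid" and x': "x' \<in> pyramid" and "x \<noteq> x'"
  shows "closed_segment (pyramid_witness x) (pyramid_witness x') \<inter> shrink \<alpha> f (convex hull pyramid) \<noteq> {}"
proof -
  obtain v1 where v1: "v1 \<in> V" and apex: "pyramid_witness (apex j) = z v1 + bvec j"
    by (rule pyramid_witness_apex)
  consider "x = apex j" "x' \<noteq> apex j" | "x \<noteq> apex j" "x' = apex j" | "x \<noteq> apex j" "x' \<noteq> apex j"
    using \<open>x \<noteq> x'\<close> by blast
  then show ?thesis
  proof cases
    case 1
    then obtain v where "v \<in> V" "x' = lift j v" using x' by (auto simp: pyramid_def)
    then show ?thesis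
      using 1 apex lift_witness_segment[OF _ v1] pyramid_witness_lift by (simp add: closed_segment_commute)
  next
    case 2
    then obtain v where "v \<in> V" "x = lift j v" using x by (auto simp: pyramid_def)
    then show ?thesis using 2 apex lift_witness_segment[OF _ v1] pyramid_witness_lift by simp
  next
    case 3
    then obtain v v' where "v \<in> V" "x = lift j v" "v' \<in> V" "x' = lift j v'"
      using x x' by (auto simp: pyramid_def)
    moreover have "shrink \<alpha> f (convex hull V) \<subseteq> shrink \<alpha> f (convex hull pyramid)"
      by (rule shrink_mono[OF hull_subset_pyramid])
    ultimately show ?thesis using segments_V \<open>x \<noteq> x'\<close> pyramid_witness_lift by fastforce
  qed
qed

lemma witnessed_pyramid: "witnessed_simplex \<alpha> f pyramid pyramid_witness"
  unfolding witnessed_simplex_def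
  using affine_independent_pyramid f_rel_interior_pyramid lattice_free_pyramid
    pyramid_witness_facet pyramid_witness_segments by blast

end

context simplex_construction
begin

lemma witnessed_simplex_exists: "\<exists>V z. witnessed_simplex \<alpha> f V z \<and> card V = CARD('n) + 1"
proof -
  have "\<exists>V z. witnessed_simplex \<alpha> f V z \<and> card V = card (insert k E) + 1 \<and>
      V \<subseteq> coord_subspace (insert k E)" if "k \<notin> E" for E
    using finite[of E] that
  proof (induction E rule: finite_induct)
    case empty
    then show ?case using witnessed_segment by (simp add: numeral_2_eq_2)
  next
    case (insert j E)
    then obtain V z where "witnessed_simplex \<alpha> f V z" "card V = card (insert k E) + 1"
      "V \<subseteq> coord_subspace (insert k E)"
      by auto
    then interpret simplex_extension coord bvec f k \<gamma> \<alpha> "insert k E" V z j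
      using insert.hyps(2) insert.prems by unfold_locales auto
    show ?case
      using witnessed_pyramid card_pyramid pyramid_subspace by (metis insert_commute)
  qed
  from this[of "UNIV - {k}"] show ?thesis by (auto simp: insert_absorb)
qed

end

theorem lemma6p3:
  fixes f :: "real^'n" and \<alpha> :: real
  assumes "\<forall>i. f $ i \<in> \<rat>" and "\<not> lattice_pt f" and "\<alpha> > 1"
  shows "(\<exists>L. good_simplex \<alpha> f L) \<and>
         (\<forall>L. good_simplex \<alpha> f L \<longrightarrow>
            (\<forall>B \<in> LF_poly CARD('n). rho f B L \<ge> ereal \<alpha>))"
proof
  obtain coord bvec k \<gamma> where "lattice_frame coord bvec" "f = \<gamma> *\<^sub>R bvec k" "\<gamma> \<notin> \<int>"
    by (rule rational_point_lattice_frame[OF assms(1,2)])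
  then interpret simplex_construction coord bvec f k \<gamma> \<alpha>
    using assms(3) by (simp add: simplex_construction_def simplex_construction_axioms_def)
  obtain V z where "witnessed_simplex \<alpha> f V z" "card V = CARD('n) + 1"
    using witnessed_simplex_exists by blast
  then show "\<exists>L. good_simplex \<alpha> f L" using good_simplex_convex_hull by blast
  show "\<forall>L. good_simplex \<alpha> f L \<longrightarrow> (\<forall>B \<in> LF_poly CARD('n). rho f B L \<ge> ereal \<alpha>)"
    using good_simplex_rho_ge by blast
qed

end
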